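(* Let $\kappa$, $E$ and $b$ be as in the context, and suppose $\delta(\kappa,b)(E)<1$. Let $g,h:(0,1)\to\mathbb{R}$ be non-decreasing functions with $g(r)\le h(r)$ for all $r\in(0,1)\setminus E$. Put $s(r)=1-b(r)(1-r)$. Then there exists $R\in[0,1)$ such that $g(r)\le h(s(r))$ for all $r\in[R,1)$.
   Context: $\kappa:(0,1)\to(0,1)$ is either the identity $\kappa(x)=x$ or a strictly increasing, continuous, convex function with $\lim_{x\to1^-}\frac{1-x}{\kappa(1-x)}=\infty$ satisfying the doubling-type property: for every $\delta:(0,1)\to(0,1)$ with $\delta(x)\to0$ as $x\to1^-$ and every $\gamma>0$ there is $\tau>0$ with $\lim_{x\to1^-}\frac{\kappa(1-x)}{\kappa((1-x)(\gamma-\delta(x)))}=\lim_{x\to1^-}\frac{\kappa(1-x)}{\kappa((1-x)(\gamma+\delta(x)))}=\tau$. $E\subset[0,1)$ is measurable with $\int_E\frac{dx}{\kappa(1-x)}<\infty$, and $b:(0,1)\to(0,1)$ is a function. The $\kappa$-density of $E$ relative to $b$ is $$\delta(\kappa,b)(E)=\limsup_{r\to1^-}\frac{\frac{\kappa(1-r)}{1-r}\int_{E\cap[r,1)}\frac{dx}{\kappa(1-x)}}{1-b(r)}.$$ *)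

theory Defs
  imports "HOL-Analysis.Analysis"
begin

definition kappa_admissible :: "(real \<Rightarrow> real) \<Rightarrow> bool" where
  "kappa_admissible \<kappa> \<longleftrightarrow>
     (\<forall>x\<in>{0<..<1}. \<kappa> x = x) \<or>
     ((\<forall>x\<in>{0<..<1}. \<kappa> x \<in> {0<..<1}) \<and>
      strict_mono_on {0<..<1} \<kappa> \<and>
      continuous_on {0<..<1} \<kappa> \<and>
      convex_on {0<..<1} \<kappa> \<and>
      filterlim (\<lambda>x. (1 - x) / \<kappa> (1 - x)) at_top (at_left 1) \<and>
      (\<forall>\<delta> :: real \<Rightarrow> real.
         (\<forall>x\<in>{0<..<1}. \<delta> x \<in> {0<..<1}) \<and> (\<delta> \<longlongrightarrow> 0) (at_left 1) \<longrightarrow>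
         (\<forall>\<gamma>>0. \<exists>\<tau>>0.
            ((\<lambda>x. \<kappa> (1 - x) / \<kappa> ((1 - x) * (\<gamma> - \<delta> x))) \<longlongrightarrow> \<tau>) (at_left 1) \<and>
            ((\<lambda>x. \<kappa> (1 - x) / \<kappa> ((1 - x) * (\<gamma> + \<delta> x))) \<longlongrightarrow> \<tau>) (at_left 1))))"

definition kappa_density :: "(real \<Rightarrow> real) \<Rightarrow> (real \<Rightarrow> real) \<Rightarrow> real set \<Rightarrow> ereal" where
  "kappa_density \<kappa> b E =
     Limsup (at_left 1)
       (\<lambda>r. ereal ((\<kappa> (1 - r) / (1 - r)) *
                    set_lebesgue_integral lebesgue (E \<inter> {r..<1}) (\<lambda>x. 1 / \<kappa> (1 - x))
                    / (1 - b r)))"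

end

theory Submission
  imports Defs
begin

text \<open>If the whole interval \<open>[r, s(r))\<close> lay in \<open>E\<close>, then, since \<open>1/\<kappa>(1-x) \<ge> 1/\<kappa>(1-r)\<close>
there, the integral of \<open>1/\<kappa>(1-x)\<close> over \<open>E \<inter> [r,1)\<close> would be at least
\<open>(1-r)(1-b(r))/\<kappa>(1-r)\<close>, i.e. the density quotient at \<open>r\<close> would be at least 1. As the density
is below 1, this fails for all \<open>r\<close> near 1, so some \<open>t \<in> [r, s(r))\<close> lies outside \<open>E\<close>, and
monotonicity gives \<open>g(r) \<le> g(t) \<le> h(t) \<le> h(s(r))\<close>.\<close>

definition kappa_density_quotient :: "(real \<Rightarrow> real) \<Rightarrow> (real \<Rightarrow> real) \<Rightarrow> real set \<Rightarrow> real \<Rightarrow> real" where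
  "kappa_density_quotient \<kappa> b E r =
     (\<kappa> (1 - r) / (1 - r)) * set_lebesgue_integral lebesgue (E \<inter> {r..<1}) (\<lambda>x. 1 / \<kappa> (1 - x))
     / (1 - b r)"

lemma kappa_density_eq_Limsup_quotient:
  "kappa_density \<kappa> b E = Limsup (at_left 1) (\<lambda>r. ereal (kappa_density_quotient \<kappa> b E r))"
  unfolding kappa_density_def kappa_density_quotient_def ..

lemma kappa_admissible_pos:
  assumes "kappa_admissible \<kappa>" "x \<in> {0<..<1}"
  shows "0 < \<kappa> x"
  using assms unfolding kappa_admissible_def by auto

lemma kappa_admissible_mono_on:
  assumes "kappa_admissible \<kappa>"
  shows "mono_on {0<..<1} \<kappa>"
  using assms unfolding kappa_admissible_def
  by (auto intro!: mono_onI dest: strict_mono_on_leD)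

lemma mono_on_reciprocal_reflect:
  fixes \<kappa> :: "real \<Rightarrow> real"
  assumes "\<And>x. x \<in> {0<..<1} \<Longrightarrow> 0 < \<kappa> x" "mono_on {0<..<1} \<kappa>"
  shows "mono_on {0<..<1} (\<lambda>x. 1 / \<kappa> (1 - x))"
proof (rule mono_onI)
  fix x y :: real assume "x \<in> {0<..<1}" "y \<in> {0<..<1}" "x \<le> y"
  then show "1 / \<kappa> (1 - x) \<le> 1 / \<kappa> (1 - y)"
    using assms by (intro divide_left_mono mono_onD[OF assms(2)]) (auto intro: mult_pos_pos)
qed

lemma set_borel_measurable_lebesgue_mono_on:
  fixes f :: "real \<Rightarrow> real"
  assumes "mono_on S f" "S \<in> sets borel" "A \<subseteq> S" "A \<in> sets lebesgue"
  shows "set_borel_measurable lebesgue A f"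
proof -
  have "f \<in> borel_measurable (restrict_space borel S)"
    using assms(1) by (rule borel_measurable_mono_on_fnc)
  then have "(\<lambda>x. indicator S x *\<^sub>R f x) \<in> borel_measurable lebesgue"
    using assms(2)
    by (subst (asm) borel_measurable_restrict_space_iff) (auto intro: measurable_completion[unfolded sets_lborel])
  then have "(\<lambda>x. indicator A x * (indicator S x *\<^sub>R f x)) \<in> borel_measurable lebesgue"
    using assms(4) by measurable
  moreover have "(\<lambda>x. indicator A x * (indicator S x *\<^sub>R f x)) = (\<lambda>x. indicator A x *\<^sub>R f x)"
    using assms(3) by (auto simp: fun_eq_iff indicator_def)
  ultimately show ?thesis
    unfolding set_borel_measurable_def by simp
qed

lemma set_integrableI_nn_set_integral:
  fixes f :: "'a \<Rightarrow> real"
  assumes "set_borel_measurable M A f" "\<And>x. x \<in> A \<Longrightarrow> 0 \<le> f x"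
    and "(\<integral>\<^sup>+ x\<in>A. ennreal (f x) \<partial>M) < \<infinity>"
  shows "set_integrable M A f"
  unfolding set_integrable_def
proof (rule integrableI_bounded)
  show "(\<lambda>x. indicator A x *\<^sub>R f x) \<in> borel_measurable M"
    using assms(1) unfolding set_borel_measurable_def .
  have "(\<integral>\<^sup>+ x. ennreal (norm (indicator A x *\<^sub>R f x)) \<partial>M) = (\<integral>\<^sup>+ x\<in>A. ennreal (f x) \<partial>M)"
    using assms(2) by (intro nn_integral_cong) (auto simp: indicator_def)
  with assms(3) show "(\<integral>\<^sup>+ x. ennreal (norm (indicator A x *\<^sub>R f x)) \<partial>M) < \<infinity>"
    by simp
qed

lemma set_integral_ge_interval:
  fixes f :: "real \<Rightarrow> real"
  assumes "set_integrable lebesgue A f" "{r..<s} \<subseteq> A" "r \<le> s"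
    and "\<And>x. x \<in> A \<Longrightarrow> 0 \<le> f x" "\<And>x. x \<in> {r..<s} \<Longrightarrow> c \<le> f x"
  shows "(s - r) * c \<le> set_lebesgue_integral lebesgue A f"
proof -
  have "integrable lebesgue (\<lambda>x. indicator {r..<s} x *\<^sub>R c)"
    using assms(3) by (intro integrable_scaleR_left integrable_real_indicator) auto
  then have "(LINT x|lebesgue. indicator {r..<s} x *\<^sub>R c) \<le> (LINT x|lebesgue. indicator A x *\<^sub>R f x)"
    using assms by (intro integral_mono) (auto simp: set_integrable_def indicator_def)
  then show ?thesis
    using assms(3) by (simp add: set_lebesgue_integral_def integral_scaleR_left)
qed

lemma kappa_density_quotient_ge_one:
  fixes \<kappa> b :: "real \<Rightarrow> real"
  assumes \<kappa>_pos: "\<And>x. x \<in> {0<..<1} \<Longrightarrow> 0 < \<kappa> x" and \<kappa>_mono: "mono_on {0<..<1} \<kappa>"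
    and int: "set_integrable lebesgue (E \<inter> {r..<1}) (\<lambda>x. 1 / \<kappa> (1 - x))"
    and r: "0 < r" "r < 1" and b: "0 < b r" "b r < 1"
    and sub: "{r..<1 - b r * (1 - r)} \<subseteq> E"
  shows "1 \<le> kappa_density_quotient \<kappa> b E r"
proof -
  define s where "s = 1 - b r * (1 - r)"
  have s_r: "s - r = (1 - r) * (1 - b r)"
    unfolding s_def by (simp add: algebra_simps)
  have "0 \<le> s - r"
    unfolding s_r using r b by simp
  then have "r \<le> s"
    by simp
  have "s \<le> 1"
    using r b unfolding s_def by simp
  have \<kappa>r: "0 < \<kappa> (1 - r)"
    using \<kappa>_pos r by simp
  have "(s - r) * (1 / \<kappa> (1 - r)) \<le> set_lebesgue_integral lebesgue (E \<inter> {r..<1}) (\<lambda>x. 1 / \<kappa> (1 - x))"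
  proof (rule set_integral_ge_interval[OF int])
    show "{r..<s} \<subseteq> E \<inter> {r..<1}"
      using sub \<open>s \<le> 1\<close> unfolding s_def by auto
    show "0 \<le> 1 / \<kappa> (1 - x)" if "x \<in> E \<inter> {r..<1}" for x
      using that r \<kappa>_pos[of "1 - x"] by auto
    show "1 / \<kappa> (1 - r) \<le> 1 / \<kappa> (1 - x)" if "x \<in> {r..<s}" for x
      using that r \<open>s \<le> 1\<close> \<kappa>r \<kappa>_pos[of "1 - x"]
      by (intro divide_left_mono mono_onD[OF \<kappa>_mono]) auto
  qed (fact \<open>r \<le> s\<close>)
  then have "\<kappa> (1 - r) / (1 - r) * ((s - r) * (1 / \<kappa> (1 - r))) / (1 - b r)
      \<le> kappa_density_quotient \<kappa> b E r"
    unfolding kappa_density_quotient_def using r b \<kappa>r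
    by (intro divide_right_mono mult_left_mono) auto
  moreover have "\<kappa> (1 - r) / (1 - r) * ((s - r) * (1 / \<kappa> (1 - r))) / (1 - b r) = 1"
    unfolding s_r using r b \<kappa>r by simp
  ultimately show ?thesis
    by simp
qed

lemma eventually_not_subset_of_kappa_density_less_one:
  fixes \<kappa> b :: "real \<Rightarrow> real"
  assumes kappa: "kappa_admissible \<kappa>"
    and E_meas: "E \<in> sets lebesgue"
    and E_int: "(\<integral>\<^sup>+ x\<in>E. ennreal (1 / \<kappa> (1 - x)) \<partial>lebesgue) < \<infinity>"
    and b_range: "\<forall>r\<in>{0<..<1}. b r \<in> {0<..<1}"
    and dens: "kappa_density \<kappa> b E < 1"
  shows "\<forall>\<^sub>F r in at_left 1. \<not> {r..<1 - b r * (1 - r)} \<subseteq> E"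
proof -
  have \<kappa>_pos: "\<And>x. x \<in> {0<..<1} \<Longrightarrow> 0 < \<kappa> x"
    using kappa by (rule kappa_admissible_pos)
  have \<kappa>_mono: "mono_on {0<..<1} \<kappa>"
    using kappa by (rule kappa_admissible_mono_on)
  have int: "set_integrable lebesgue (E \<inter> {r..<1}) (\<lambda>x. 1 / \<kappa> (1 - x))" if "0 < r" for r
  proof (rule set_integrableI_nn_set_integral)
    show "set_borel_measurable lebesgue (E \<inter> {r..<1}) (\<lambda>x. 1 / \<kappa> (1 - x))"
      using that E_meas
      by (intro set_borel_measurable_lebesgue_mono_on[OF mono_on_reciprocal_reflect[OF \<kappa>_pos \<kappa>_mono]]) auto
    show "0 \<le> 1 / \<kappa> (1 - x)" if "x \<in> E \<inter> {r..<1}" for x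
      using that \<open>0 < r\<close> \<kappa>_pos[of "1 - x"] by auto
    show "(\<integral>\<^sup>+ x\<in>E \<inter> {r..<1}. ennreal (1 / \<kappa> (1 - x)) \<partial>lebesgue) < \<infinity>"
      using E_int nn_set_integral_set_mono[of "E \<inter> {r..<1}" E] by (meson inf_le1 le_less_trans)
  qed
  have "\<forall>\<^sub>F r in at_left 1. ereal (kappa_density_quotient \<kappa> b E r) < 1"
    using dens unfolding kappa_density_eq_Limsup_quotient by (rule Limsup_lessD)
  moreover have "\<forall>\<^sub>F r in at_left (1::real). r \<in> {0<..<1}"
    by (rule eventually_at_left_real) simp
  ultimately show ?thesis
  proof eventually_elim
    case (elim r)
    then show ?case
      using kappa_density_quotient_ge_one[OF \<kappa>_pos \<kappa>_mono int] b_range by fastforce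
  qed
qed

theorem lemma2:
  fixes \<kappa> b g h :: "real \<Rightarrow> real" and E :: "real set"
  assumes kappa: "kappa_admissible \<kappa>"
    and E_sub: "E \<subseteq> {0..<1}"
    and E_meas: "E \<in> sets lebesgue"
    and E_int: "(\<integral>\<^sup>+ x\<in>E. ennreal (1 / \<kappa> (1 - x)) \<partial>lebesgue) < \<infinity>"
    and b_range: "\<forall>r\<in>{0<..<1}. b r \<in> {0<..<1}"
    and dens: "kappa_density \<kappa> b E < 1"
    and g_mono: "mono_on {0<..<1} g"
    and h_mono: "mono_on {0<..<1} h"
    and gh: "\<forall>r\<in>{0<..<1} - E. g r \<le> h r"
  shows "\<exists>R\<in>{0..<1}. \<forall>r\<in>{R..<1} \<inter> {0<..}. g r \<le> h (1 - b r * (1 - r))"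
proof -
  obtain c where "c < 1" and c: "\<And>r. c < r \<Longrightarrow> r < 1 \<Longrightarrow> \<not> {r..<1 - b r * (1 - r)} \<subseteq> E"
    using eventually_not_subset_of_kappa_density_less_one[OF kappa E_meas E_int b_range dens]
    unfolding eventually_at_left_field by blast
  define R where "R = max 0 ((c + 1) / 2)"
  have "g r \<le> h (1 - b r * (1 - r))" if "r \<in> {R..<1} \<inter> {0<..}" for r
  proof -
    have r: "0 < r" "c < r" "r < 1"
      using that \<open>c < 1\<close> unfolding R_def by auto
    then obtain t where t: "r \<le> t" "t < 1 - b r * (1 - r)" "t \<notin> E"
      using c[OF r(2,3)] by (auto simp: subset_iff)
    have "0 < b r * (1 - r)"
      using b_range r by simp
    then have "t \<in> {0<..<1}" "1 - b r * (1 - r) \<in> {0<..<1}"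
      using r t b_range mult_left_le_one_le[of "1 - r" "b r"] by auto
    then have "g r \<le> g t" "g t \<le> h t" "h t \<le> h (1 - b r * (1 - r))"
      using r t gh by (auto intro: mono_onD[OF g_mono] mono_onD[OF h_mono])
    then show ?thesis
      by linarith
  qed
  moreover have "R \<in> {0..<1}"
    using \<open>c < 1\<close> unfolding R_def by auto
  ultimately show ?thesis
    by blast
qed

end
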